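(* Let $\mathcal{D}$ be any distribution over pairs $(x,y)$ with $x\in\mathcal{X}\subseteq\mathbb{R}^d$ and $y\in\{1,\dots,k\}$, and let $h:\mathcal{X}\to\{-1,1\}$ be any hypothesis. Let $\pi_i=P(y=i)$ and $\beta=P(h(x)>0)$, and let \[ J(h)=2\sum_{i=1}^k \pi_i\,\bigl|P(h(x)>0)-P(h(x)>0\mid i)\bigr|. \] Then \[ \beta\in\Bigl[\tfrac12\bigl(1-\sqrt{1-J(h)}\bigr),\ \tfrac12\bigl(1+\sqrt{1-J(h)}\bigr)\Bigr]. \]
   Context: $P(h(x)>0\mid i)$ denotes the probability that $h(x)>0$ conditional on the label being $i$. It is known that $J(h)\in[0,1]$. *)

theory Defs
  imports "HOL-Probability.Probability"
begin

text \<open>Conditional probability P(A | B) = P(A \<inter> B) / P(B) (0 if P(B) = 0).\<close>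
definition cond_prob :: "'a measure \<Rightarrow> 'a set \<Rightarrow> 'a set \<Rightarrow> real" where
  "cond_prob M A B = measure M (A \<inter> B) / measure M B"

end

theory Submission
  imports Defs
begin

text \<open>Write \<open>a\<^sub>i = P(h(x) > 0, y = i)\<close>, so that \<open>\<pi>\<^sub>i |\<beta> - P(h(x) > 0 | i)| = |\<beta> \<pi>\<^sub>i - a\<^sub>i|\<close>.
  These deviations sum to zero, so their absolute values sum to twice the positive part
  \<open>A - \<beta> P\<close>, where \<open>A\<close> and \<open>P\<close> sum \<open>a\<^sub>i\<close> and \<open>\<pi>\<^sub>i\<close> over the labels with positive deviation.
  Since \<open>A \<le> min(\<beta>, P)\<close>, this is at most \<open>\<beta> (1 - \<beta>)\<close>; hence \<open>J \<le> 4 \<beta> (1 - \<beta>)\<close>, i.e.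
  \<open>(2 \<beta> - 1)\<^sup>2 \<le> 1 - J\<close>. Only the event \<open>h(x) > 0\<close> matters.\<close>

lemma positive_part_le_mult_compl:
  fixes A P b :: real
  assumes "A \<le> P" and "A \<le> b" and "0 \<le> b" and "b \<le> 1"
  shows "A - b * P \<le> b * (1 - b)"
proof (cases "P \<le> b")
  case True
  have "A - b * P \<le> P * (1 - b)" using \<open>A \<le> P\<close> by (simp add: algebra_simps)
  also have "\<dots> \<le> b * (1 - b)" using True \<open>b \<le> 1\<close> by (intro mult_right_mono) auto
  finally show ?thesis .
next
  case False
  then have "b * b \<le> b * P" using \<open>0 \<le> b\<close> by (simp add: mult_left_mono)
  then show ?thesis using \<open>A \<le> b\<close> by (simp add: algebra_simps)
qed

lemma sum_abs_deviation_le: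
  fixes a p :: "'i \<Rightarrow> real" and b :: real
  assumes "finite I"
    and nonneg: "\<And>i. i \<in> I \<Longrightarrow> 0 \<le> a i"
    and le: "\<And>i. i \<in> I \<Longrightarrow> a i \<le> p i"
    and sum_p: "(\<Sum>i\<in>I. p i) = 1"
    and sum_a: "(\<Sum>i\<in>I. a i) = b"
  shows "(\<Sum>i\<in>I. \<bar>b * p i - a i\<bar>) \<le> 2 * b * (1 - b)"
proof -
  define S where "S = {i\<in>I. a i > b * p i}"
  have "S \<subseteq> I" by (auto simp: S_def)
  have split: "(\<Sum>i\<in>I. f i) = (\<Sum>i\<in>S. f i) + (\<Sum>i\<in>I - S. f i)" for f :: "'i \<Rightarrow> real"
    using sum.subset_diff[OF \<open>S \<subseteq> I\<close> \<open>finite I\<close>] by (simp add: add.commute)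
  have "(\<Sum>i\<in>I. b * p i - a i) = 0"
    using sum_p sum_a by (simp add: sum_subtractf sum_distrib_left[symmetric])
  then have balance: "(\<Sum>i\<in>I - S. b * p i - a i) = (\<Sum>i\<in>S. a i - b * p i)"
    using split[of "\<lambda>i. b * p i - a i"] by (simp add: sum_subtractf)
  have "(\<Sum>i\<in>I. \<bar>b * p i - a i\<bar>) = (\<Sum>i\<in>S. a i - b * p i) + (\<Sum>i\<in>I - S. b * p i - a i)"
    by (subst split) (auto intro!: sum.cong simp: S_def)
  also have "\<dots> = 2 * (\<Sum>i\<in>S. a i - b * p i)" by (simp add: balance)
  also have "\<dots> = 2 * ((\<Sum>i\<in>S. a i) - b * (\<Sum>i\<in>S. p i))"
    by (simp add: sum_subtractf sum_distrib_left)
  finally have abs_sum: "(\<Sum>i\<in>I. \<bar>b * p i - a i\<bar>) = 2 * ((\<Sum>i\<in>S. a i) - b * (\<Sum>i\<in>S. p i))" .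
  have "(\<Sum>i\<in>S. a i) \<le> (\<Sum>i\<in>S. p i)" using \<open>S \<subseteq> I\<close> le by (intro sum_mono) auto
  moreover have "(\<Sum>i\<in>S. a i) \<le> b"
    using split[of a] sum_a sum_nonneg[of "I - S" a] nonneg by auto
  moreover have "0 \<le> b" unfolding sum_a[symmetric] using nonneg by (intro sum_nonneg) auto
  moreover have "b \<le> 1" unfolding sum_a[symmetric] sum_p[symmetric] using le by (intro sum_mono) auto
  ultimately show ?thesis
    using abs_sum positive_part_le_mult_compl by fastforce
qed

lemma mem_centered_interval_if_le_4_mult_compl:
  fixes b J :: real
  assumes "J \<le> 4 * b * (1 - b)"
  shows "b \<in> {(1 - sqrt (1 - J)) / 2 .. (1 + sqrt (1 - J)) / 2}"
proof -
  have "(2 * b - 1)\<^sup>2 \<le> 1 - J" using assms by (simp add: power2_eq_square algebra_simps)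
  then have "sqrt ((2 * b - 1)\<^sup>2) \<le> sqrt (1 - J)" by (rule real_sqrt_le_mono)
  then have "\<bar>2 * b - 1\<bar> \<le> sqrt (1 - J)" by (simp only: real_sqrt_abs)
  then show ?thesis by auto
qed

context prob_space
begin

lemma weighted_cond_prob_deviation:
  assumes "L \<in> events"
  shows "prob L * \<bar>b - cond_prob M A L\<bar> = \<bar>b * prob L - prob (A \<inter> L)\<bar>"
proof (cases "prob L = 0")
  case True
  then have "prob (A \<inter> L) = 0"
    using finite_measure_mono[of "A \<inter> L" L] assms by (simp add: antisym)
  then show ?thesis using True by simp
next
  case False
  then have "prob L * (b - cond_prob M A L) = b * prob L - prob (A \<inter> L)"
    unfolding cond_prob_def by (simp add: field_simps)
  then show ?thesis by (metis abs_mult abs_of_nonneg measure_nonneg)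
qed

lemma sum_prob_inter_partition:
  assumes "finite I" and "A \<in> events" and "\<And>i. i \<in> I \<Longrightarrow> L i \<in> events"
    and "disjoint_family_on L I" and "AE x in M. x \<in> (\<Union>i\<in>I. L i)"
  shows "(\<Sum>i\<in>I. prob (A \<inter> L i)) = prob A"
proof -
  have "prob A = prob (\<Union>i\<in>I. A \<inter> L i)"
    using assms(1-3,5) by (intro measure_eq_AE) (auto elim!: eventually_mono)
  also have "\<dots> = (\<Sum>i\<in>I. prob (A \<inter> L i))"
    using assms(1-4) by (intro finite_measure_finite_Union) (auto simp: disjoint_family_on_def)
  finally show ?thesis by simp
qed

lemma sum_cond_prob_deviation_le:
  assumes "finite I" and "A \<in> events" and "\<And>i. i \<in> I \<Longrightarrow> L i \<in> events"
    and "disjoint_family_on L I" and "AE x in M. x \<in> (\<Union>i\<in>I. L i)"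
  shows "2 * (\<Sum>i\<in>I. prob (L i) * \<bar>prob A - cond_prob M A (L i)\<bar>) \<le> 4 * prob A * (1 - prob A)"
proof -
  have "(\<Sum>i\<in>I. prob (L i) * \<bar>prob A - cond_prob M A (L i)\<bar>)
      = (\<Sum>i\<in>I. \<bar>prob A * prob (L i) - prob (A \<inter> L i)\<bar>)"
    using assms(3) by (simp add: weighted_cond_prob_deviation)
  also have "\<dots> \<le> 2 * prob A * (1 - prob A)"
  proof (rule sum_abs_deviation_le)
    show "(\<Sum>i\<in>I. prob (L i)) = 1"
      using sum_prob_inter_partition[of I "space M" L] assms prob_space by simp
    show "(\<Sum>i\<in>I. prob (A \<inter> L i)) = prob A"
      using sum_prob_inter_partition assms by blast
    show "prob (A \<inter> L i) \<le> prob (L i)" if "i \<in> I" for i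
      using assms(3) that by (intro finite_measure_mono) auto
  qed (use assms in auto)
  finally show ?thesis by simp
qed

end

theorem lemma2:
  fixes D :: "((real ^ 'd::finite) \<times> nat) measure"
    and X :: "(real ^ 'd::finite) set"
    and h :: "real ^ 'd::finite \<Rightarrow> real"
    and k :: nat
  assumes "prob_space D"
    and "AE p in D. fst p \<in> X"
    and "AE p in D. snd p \<in> {1..k}"
    and "\<forall>x\<in>X. h x = 1 \<or> h x = -1"
    and "(\<lambda>p. h (fst p)) \<in> borel_measurable D"
    and "snd \<in> measurable D (count_space UNIV)"
  shows
    "let pos = {p \<in> space D. h (fst p) > 0};
         lab = (\<lambda>i. {p \<in> space D. snd p = i});
         \<pi> = (\<lambda>i. measure D (lab i));
         \<beta> = measure D pos;
         J = 2 * (\<Sum>i=1..k. \<pi> i * \<bar>\<beta> - cond_prob D pos (lab i)\<bar>)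
     in \<beta> \<in> {(1 - sqrt (1 - J)) / 2 .. (1 + sqrt (1 - J)) / 2}"
proof -
  interpret prob_space D by fact
  define pos where "pos = {p \<in> space D. h (fst p) > 0}"
  define lab where "lab = (\<lambda>i::nat. {p \<in> space D. snd p = i})"
  have "pos \<in> events"
    unfolding pos_def using assms(5) by measurable
  moreover have "lab i \<in> events" for i
    unfolding lab_def using assms(6) by measurable
  moreover have "disjoint_family_on lab {1..k}"
    unfolding lab_def disjoint_family_on_def by auto
  moreover have "AE p in D. p \<in> (\<Union>i\<in>{1..k}. lab i)"
    using assms(3) AE_space unfolding lab_def by eventually_elim auto
  ultimately have "2 * (\<Sum>i=1..k. prob (lab i) * \<bar>prob pos - cond_prob D pos (lab i)\<bar>)
      \<le> 4 * prob pos * (1 - prob pos)"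
    by (intro sum_cond_prob_deviation_le) auto
  then show ?thesis
    unfolding Let_def pos_def[symmetric] lab_def[symmetric]
    by (rule mem_centered_interval_if_le_4_mult_compl)
qed

end
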